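(* Let $\alpha,\beta>-1$ and $n\ge 0$. For $z\in\mathcal{E}_\rho$, i.e. $z=\tfrac12(u+u^{-1})$ with $|u|=\rho\ge 1$, $$P_n^{(\alpha,\beta)}(z)=\sum_{k=-n}^{n} d_{|k|,n}\,u^k,$$ where for $0\le k\le n$ $$d_{k,n}=\frac{(n+\alpha+\beta+1)_k\,(k+\alpha+1)_{n-k}}{(n-k)!\,2^{2k}\,\Gamma(k+1)}\;{}_3F_2\!\left[\begin{matrix}k-n,\ n+k+\alpha+\beta+1,\ k+\tfrac12\\ k+\alpha+1,\ 2k+1\end{matrix};1\right].$$
   Context: $P_n^{(\alpha,\beta)}$ is the Jacobi polynomial $P_n^{(\alpha,\beta)}(x)=2^{-n}\sum_{k=0}^n\binom{n+\alpha}{n-k}\binom{n+\beta}{k}(x-1)^k(x+1)^{n-k}$, $\alpha,\beta>-1$. The Bernstein ellipse is $\mathcal{E}_\rho=\{\tfrac12(u+u^{-1}): u=\rho e^{i\theta},\ 0\le\theta<2\pi\}$, $\rho\ge1$. $(a)_0=1$, $(a)_k=a(a+1)\cdots(a+k-1)$ is the Pochhammer symbol, and ${}_3F_2\left[\begin{matrix}a_1,a_2,a_3\\ b_1,b_2\end{matrix};x\right]=\sum_{j\ge0}\frac{(a_1)_j(a_2)_j(a_3)_j}{(b_1)_j(b_2)_j}\frac{x^j}{j!}$ (a terminating sum here since $k-n\le 0$). *)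

theory Defs
  imports "HOL-Analysis.Analysis"
begin

definition jacobiP :: "nat \<Rightarrow> real \<Rightarrow> real \<Rightarrow> complex \<Rightarrow> complex" where
  "jacobiP n \<alpha> \<beta> x =
     (\<Sum>k\<le>n. complex_of_real (((real n + \<alpha>) gchoose (n - k)) * ((real n + \<beta>) gchoose k))
        * (x - 1) ^ k * (x + 1) ^ (n - k)) / 2 ^ n"

definition hyp3F2 :: "real \<Rightarrow> real \<Rightarrow> real \<Rightarrow> real \<Rightarrow> real \<Rightarrow> real \<Rightarrow> real" where
  "hyp3F2 a1 a2 a3 b1 b2 x =
     (\<Sum>j. pochhammer a1 j * pochhammer a2 j * pochhammer a3 j
            / (pochhammer b1 j * pochhammer b2 j) * x ^ j / fact j)"

definition jacobi_d :: "real \<Rightarrow> real \<Rightarrow> nat \<Rightarrow> nat \<Rightarrow> real" where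
  "jacobi_d \<alpha> \<beta> k n =
     pochhammer (real n + \<alpha> + \<beta> + 1) k * pochhammer (real k + \<alpha> + 1) (n - k)
     / (fact (n - k) * 2 ^ (2 * k) * Gamma (real k + 1))
     * hyp3F2 (real k - real n) (real n + real k + \<alpha> + \<beta> + 1) (real k + 1 / 2)
              (real k + \<alpha> + 1) (2 * real k + 1) 1"

end

theory Submission
  imports Defs
begin

text \<open>
  With \<open>y = (z - 1)/2\<close> the Jacobi polynomial is
  \<open>\<Sum>\<^sub>j binom(n+\<alpha>, n-j) binom(n+\<alpha>+\<beta>+j, j) y\<^sup>j\<close>, a Chu-Vandermonde rearrangement of the
  defining sum. For \<open>z = (u + u\<^sup>-\<^sup>1)/2\<close> one gets \<open>y = (u - 1)\<^sup>2/(4u)\<close>, so \<open>y\<^sup>j\<close> is a Laurent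
  polynomial in \<open>u\<close>, symmetric under \<open>u \<mapsto> u\<^sup>-\<^sup>1\<close>. The coefficient of \<open>u\<^sup>k\<close> and \<open>u\<^sup>-\<^sup>k\<close> is then a
  finite sum over \<open>j = k + i\<close>; writing all binomials and factorials as Pochhammer symbols
  (using the duplication formula for \<open>(2m)!\<close>) turns its \<open>i\<close>-th term into the \<open>i\<close>-th term of the
  terminating \<open>\<^sub>3F\<^sub>2\<close> in \<open>d\<^sub>k\<^sub>,\<^sub>n\<close>.
\<close>

lemma gbinomial_choose_Vandermonde:
  fixes a b :: real
  assumes "j \<le> n"
  shows "(\<Sum>k\<le>j. ((real n + a) gchoose (n - k)) * (b gchoose k) * real ((n - k) choose (j - k)))
       = ((real n + a) gchoose (n - j)) * ((a + b + real j) gchoose j)"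
proof -
  have revision: "((real n + a) gchoose (n - k)) * real ((n - k) choose (j - k))
      = ((real n + a) gchoose (n - j)) * ((a + real j) gchoose (j - k))" if "k \<le> j" for k
  proof -
    have "real ((n - k) choose (j - k)) = real ((n - k) choose (n - j))"
      using that assms binomial_symmetric[of "j - k" "n - k"] by (simp add: diff_diff_cancel)
    also have "\<dots> = real (n - k) gchoose (n - j)"
      by (simp add: binomial_gbinomial)
    finally show ?thesis
      using gbinomial_trinomial_revision[of "n - j" "n - k" "real n + a"] that assms
      by (simp add: of_nat_diff)
  qed
  have "(\<Sum>k\<le>j. ((real n + a) gchoose (n - k)) * (b gchoose k) * real ((n - k) choose (j - k)))
      = ((real n + a) gchoose (n - j)) * (\<Sum>k\<le>j. (b gchoose k) * ((a + real j) gchoose (j - k)))"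
    unfolding sum_distrib_left
  proof (rule sum.cong)
    fix k assume "k \<in> {..j}"
    then show "((real n + a) gchoose (n - k)) * (b gchoose k) * real ((n - k) choose (j - k))
        = ((real n + a) gchoose (n - j)) * ((b gchoose k) * ((a + real j) gchoose (j - k)))"
      using revision[of k] by (simp add: mult_ac)
  qed simp
  also have "\<dots> = ((real n + a) gchoose (n - j)) * ((a + b + real j) gchoose j)"
    using gbinomial_Vandermonde[of b "a + real j" j] by (simp add: atLeast0AtMost add_ac)
  finally show ?thesis .
qed

definition jacobi_coeff :: "real \<Rightarrow> real \<Rightarrow> nat \<Rightarrow> nat \<Rightarrow> real" where
  "jacobi_coeff \<alpha> \<beta> n j = ((real n + \<alpha>) gchoose (n - j)) * ((real n + \<alpha> + \<beta> + real j) gchoose j)"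

lemma jacobiP_eq_sum_jacobi_coeff:
  "jacobiP n \<alpha> \<beta> x = (\<Sum>j\<le>n. complex_of_real (jacobi_coeff \<alpha> \<beta> n j) * ((x - 1) / 2) ^ j)"
proof -
  define y where "y = (x - 1) / 2"
  define c where "c k = complex_of_real (((real n + \<alpha>) gchoose (n - k)) * ((real n + \<beta>) gchoose k))" for k
  have "jacobiP n \<alpha> \<beta> x = (\<Sum>k\<le>n. c k * y ^ k * (1 + y) ^ (n - k))"
    unfolding jacobiP_def sum_divide_distrib
  proof (rule sum.cong)
    fix k assume "k \<in> {..n}"
    then have "(2::complex) ^ n = 2 ^ k * 2 ^ (n - k)"
      by (simp flip: power_add)
    moreover have "x - 1 = 2 * y" "x + 1 = 2 * (1 + y)"
      by (simp_all add: y_def field_simps)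
    then have "(x - 1) ^ k = 2 ^ k * y ^ k" "(x + 1) ^ (n - k) = 2 ^ (n - k) * (1 + y) ^ (n - k)"
      by (simp_all only: power_mult_distrib)
    ultimately show "complex_of_real (((real n + \<alpha>) gchoose (n - k)) * ((real n + \<beta>) gchoose k))
        * (x - 1) ^ k * (x + 1) ^ (n - k) / 2 ^ n = c k * y ^ k * (1 + y) ^ (n - k)"
      by (simp add: c_def)
  qed simp
  also have "\<dots> = (\<Sum>k\<le>n. \<Sum>m\<le>n - k. c k * of_nat ((n - k) choose m) * y ^ (k + m))"
  proof -
    have "(1 + y) ^ m = (\<Sum>i\<le>m. of_nat (m choose i) * y ^ i)" for m
      using binomial_ring[of y 1 m] by (simp add: add.commute)
    then show ?thesis
      by (simp add: sum_distrib_left power_add mult_ac)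
  qed
  also have "\<dots> = (\<Sum>(k, m)\<in>{(k, m). k + m \<le> n}. c k * of_nat ((n - k) choose m) * y ^ (k + m))"
  proof -
    have "{(k, m). k + m \<le> n} = Sigma {..n} (\<lambda>k. {..n - k})"
      by auto
    then show ?thesis
      by (simp add: sum.Sigma)
  qed
  also have "\<dots> = (\<Sum>j\<le>n. \<Sum>k\<le>j. c k * of_nat ((n - k) choose (j - k)) * y ^ (k + (j - k)))"
    by (rule sum.triangle_reindex_eq)
  also have "\<dots> = (\<Sum>j\<le>n. complex_of_real (jacobi_coeff \<alpha> \<beta> n j) * y ^ j)"
  proof (rule sum.cong)
    fix j assume "j \<in> {..n}"
    have "(\<Sum>k\<le>j. c k * of_nat ((n - k) choose (j - k))) = complex_of_real
        (\<Sum>k\<le>j. ((real n + \<alpha>) gchoose (n - k)) * ((real n + \<beta>) gchoose k) * real ((n - k) choose (j - k)))"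
      by (simp add: c_def)
    also have "\<dots> = complex_of_real (jacobi_coeff \<alpha> \<beta> n j)"
      using \<open>j \<in> {..n}\<close> gbinomial_choose_Vandermonde[of j n \<alpha> "real n + \<beta>"]
      by (simp add: jacobi_coeff_def add_ac)
    finally show "(\<Sum>k\<le>j. c k * of_nat ((n - k) choose (j - k)) * y ^ (k + (j - k)))
        = complex_of_real (jacobi_coeff \<alpha> \<beta> n j) * y ^ j"
      by (simp flip: sum_distrib_right)
  qed simp
  finally show ?thesis
    by (simp only: y_def)
qed

text \<open>For \<open>z = (u + u\<^sup>-\<^sup>1)/2\<close> one has \<open>(z - 1)/2 = (u - 1)\<^sup>2/(4u)\<close>, so this is the coefficient
  of \<open>u\<^sup>K\<close> and of \<open>u\<^sup>-\<^sup>K\<close> in \<open>((z - 1)/2)\<^sup>j\<close>.\<close>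
definition joukowski_coeff :: "nat \<Rightarrow> nat \<Rightarrow> real" where
  "joukowski_coeff j K = (if K \<le> j then (-1) ^ (j + K) * real ((2 * j) choose (j + K)) / 4 ^ j else 0)"

lemma joukowski_coeff_nat_abs_diff:
  assumes "i \<le> 2 * j"
  shows "joukowski_coeff j (nat \<bar>int i - int j\<bar>) = (-1) ^ i * real ((2 * j) choose i) / 4 ^ j"
proof (cases "j \<le> i")
  case True
  then show ?thesis
    using assms by (simp add: joukowski_coeff_def nat_diff_distrib)
next
  case False
  then have "nat \<bar>int i - int j\<bar> = j - i" "j + (j - i) = 2 * j - i"
    by simp_all
  moreover have "(2 * j) choose (2 * j - i) = (2 * j) choose i"
    using assms binomial_symmetric[of i "2 * j"] by simp
  moreover have "(-1::real) ^ (2 * j - i) = (-1) ^ i"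
    using assms by (simp add: minus_one_power_iff)
  ultimately show ?thesis
    using False by (simp add: joukowski_coeff_def)
qed

lemma joukowski_shifted_power:
  fixes u :: complex
  assumes "u \<noteq> 0" and "j \<le> n"
  shows "(((u + inverse u) / 2 - 1) / 2) ^ j
       = (\<Sum>k = -int n..int n. complex_of_real (joukowski_coeff j (nat \<bar>k\<bar>)) * u powi k)"
proof -
  define c where "c k = complex_of_real (joukowski_coeff j (nat \<bar>k\<bar>)) * u powi k" for k
  have "((u + inverse u) / 2 - 1) / 2 = (u + (-1)) ^ 2 / (4 * u)"
    using assms(1) by (simp add: field_simps power2_eq_square)
  then have "(((u + inverse u) / 2 - 1) / 2) ^ j = (u + (-1)) ^ (2 * j) / (4 ^ j * u ^ j)"
    by (simp add: power_divide power_mult_distrib power_mult)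
  also have "\<dots> = (\<Sum>i\<le>2 * j. of_nat ((2 * j) choose i) * u ^ i * (-1) ^ (2 * j - i)) / (4 ^ j * u ^ j)"
    by (simp only: binomial_ring)
  also have "\<dots> = (\<Sum>i\<le>2 * j. c (int i - int j))"
    unfolding sum_divide_distrib
  proof (rule sum.cong)
    fix i assume "i \<in> {..2 * j}"
    then have "i \<le> 2 * j" by simp
    moreover from this have "(-1::complex) ^ (2 * j - i) = (-1) ^ i"
      by (simp add: minus_one_power_iff)
    moreover have "u powi (int i - int j) = u ^ i / u ^ j"
      using assms(1) by (simp add: power_int_diff)
    ultimately show "of_nat ((2 * j) choose i) * u ^ i * (-1) ^ (2 * j - i) / (4 ^ j * u ^ j)
        = c (int i - int j)"
      by (simp add: c_def joukowski_coeff_nat_abs_diff field_simps)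
  qed simp
  also have "\<dots> = (\<Sum>k = -int j..int j. c k)"
    by (rule sum.reindex_bij_witness[where i = "\<lambda>k. nat (k + int j)" and j = "\<lambda>i. int i - int j"]) auto
  also have "\<dots> = (\<Sum>k = -int n..int n. c k)"
    by (rule sum.mono_neutral_left) (use assms(2) in \<open>auto simp: c_def joukowski_coeff_def\<close>)
  finally show ?thesis
    by (simp add: c_def)
qed

lemma fact_double_four_power:
  "(fact (2 * n) :: 'a :: field_char_0) = 4 ^ n * pochhammer (1 / 2) n * fact n"
  by (simp add: fact_double power_mult)

lemma joukowski_coeff_add_eq_pochhammer:
  "joukowski_coeff (K + i) K = (-1) ^ i * pochhammer (real K + 1 / 2) i * fact (K + i)
     / (4 ^ K * fact K * pochhammer (2 * real K + 1) i * fact i)"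
proof -
  define H where "H = pochhammer (1 / 2 :: real) K"
  define H' where "H' = pochhammer (real K + 1 / 2) i"
  define B where "B = pochhammer (2 * real K + 1) i"
  have "real ((2 * (K + i)) choose (K + i + K)) = fact (2 * (K + i)) / (fact (2 * K + i) * fact i)"
    by (simp add: binomial_fact mult_2 add_ac)
  also have "(fact (2 * (K + i)) :: real) = 4 ^ K * 4 ^ i * (H * H') * fact (K + i)"
    unfolding fact_double_four_power H_def H'_def pochhammer_product' by (simp add: power_add add_ac)
  also have "(fact (2 * K + i) :: real) = 4 ^ K * H * fact K * B"
    unfolding pochhammer_fact pochhammer_product' B_def H_def
    by (simp flip: pochhammer_fact fact_double_four_power add: add_ac)
  finally have "real ((2 * (K + i)) choose (K + i + K))
      = 4 ^ i * H' * fact (K + i) / (fact K * B * fact i)"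
    by (simp add: H_def pochhammer_eq_0_iff)
  moreover have "(-1 :: real) ^ (K + i + K) = (-1) ^ i"
    by (simp add: minus_one_power_iff)
  moreover have "(4 :: real) ^ (K + i) = 4 ^ K * 4 ^ i"
    by (simp add: power_add)
  ultimately show ?thesis
    unfolding joukowski_coeff_def H'_def B_def by (simp add: mult_ac)
qed

definition hyp3F2_term :: "real \<Rightarrow> real \<Rightarrow> real \<Rightarrow> real \<Rightarrow> real \<Rightarrow> real \<Rightarrow> nat \<Rightarrow> real" where
  "hyp3F2_term a1 a2 a3 b1 b2 x j =
     pochhammer a1 j * pochhammer a2 j * pochhammer a3 j
       / (pochhammer b1 j * pochhammer b2 j) * x ^ j / fact j"

lemma hyp3F2_terminating:
  "hyp3F2 (- real m) a2 a3 b1 b2 x = (\<Sum>j\<le>m. hyp3F2_term (- real m) a2 a3 b1 b2 x j)"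
  unfolding hyp3F2_def hyp3F2_term_def[symmetric]
proof (rule suminf_finite)
  fix j assume "j \<notin> {..m}"
  then have "pochhammer (- real m) j = 0"
    by (auto simp: pochhammer_eq_0_iff)
  then show "hyp3F2_term (- real m) a2 a3 b1 b2 x j = 0"
    by (simp add: hyp3F2_term_def)
qed simp

definition jacobi_d_prefactor :: "real \<Rightarrow> real \<Rightarrow> nat \<Rightarrow> nat \<Rightarrow> real" where
  "jacobi_d_prefactor \<alpha> \<beta> K n =
     pochhammer (real n + \<alpha> + \<beta> + 1) K * pochhammer (real K + \<alpha> + 1) (n - K)
     / (fact (n - K) * 2 ^ (2 * K) * Gamma (real K + 1))"

lemma jacobi_d_eq_sum_hyp3F2_term:
  assumes "K \<le> n"
  shows "jacobi_d \<alpha> \<beta> K n = jacobi_d_prefactor \<alpha> \<beta> K n *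
    (\<Sum>i\<le>n - K. hyp3F2_term (real K - real n) (real n + real K + \<alpha> + \<beta> + 1) (real K + 1 / 2)
                   (real K + \<alpha> + 1) (2 * real K + 1) 1 i)"
proof -
  have "real K - real n = - real (n - K)"
    using assms by simp
  then show ?thesis
    unfolding jacobi_d_def jacobi_d_prefactor_def by (simp only: hyp3F2_terminating)
qed

lemma pochhammer_minus_of_nat_fact:
  assumes "i \<le> m"
  shows "pochhammer (- real m) i = (-1) ^ i * fact m / fact (m - i)"
proof -
  have "pochhammer (- real m) i = (-1) ^ i * pochhammer (real (m - i) + 1) i"
    using assms by (simp add: pochhammer_minus of_nat_diff)
  moreover have "(fact m :: real) = fact (m - i) * pochhammer (real (m - i) + 1) i"
    using pochhammer_product'[of "1::real" "m - i" i] assms by (simp add: pochhammer_fact of_nat_diff add.commute)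
  ultimately show ?thesis
    by simp
qed

lemma jacobi_coeff_mult_joukowski_coeff:
  fixes \<alpha> \<beta> :: real
  assumes "\<alpha> > -1" and "K + i \<le> n"
  shows "jacobi_coeff \<alpha> \<beta> n (K + i) * joukowski_coeff (K + i) K
       = jacobi_d_prefactor \<alpha> \<beta> K n * hyp3F2_term (real K - real n) (real n + real K + \<alpha> + \<beta> + 1)
           (real K + 1 / 2) (real K + \<alpha> + 1) (2 * real K + 1) 1 i"
proof -
  define r where "r = n - K - i"
  have n: "n = K + i + r"
    using assms(2) by (simp add: r_def)
  define P where "P = pochhammer (real n + \<alpha> + \<beta> + 1) K"
  define Q where "Q = pochhammer (real n + real K + \<alpha> + \<beta> + 1) i"
  define A where "A = pochhammer (real K + \<alpha> + 1) i"
  define R where "R = pochhammer (real K + \<alpha> + 1 + real i) r"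
  have lower_binomial: "(real n + \<alpha>) gchoose (n - (K + i)) = R / fact r"
  proof -
    have "n - (K + i) = r" "real n + \<alpha> - real r + 1 = real K + \<alpha> + 1 + real i"
      using n by simp_all
    then show ?thesis
      by (simp only: gbinomial_pochhammer' R_def)
  qed
  have upper_binomial: "(real n + \<alpha> + \<beta> + real (K + i)) gchoose (K + i) = P * Q / fact (K + i)"
  proof -
    have "pochhammer (real n + \<alpha> + \<beta> + 1) (K + i) = P * Q"
      unfolding P_def Q_def pochhammer_product' by (simp add: add_ac)
    then show ?thesis
      by (simp add: gbinomial_pochhammer')
  qed
  have prefactor_pochhammer: "pochhammer (real K + \<alpha> + 1) (n - K) = A * R"
  proof -
    have "n - K = i + r"
      using n by simp
    then show ?thesis
      by (simp only: A_def R_def pochhammer_product')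
  qed
  have falling_pochhammer: "pochhammer (real K - real n) i = (-1) ^ i * fact (n - K) / fact r"
    using pochhammer_minus_of_nat_fact[of i "n - K"] assms(2) by (simp add: r_def)
  have "A \<noteq> 0"
    using assms(1) by (auto simp: A_def pochhammer_eq_0_iff)
  have "(2 :: real) ^ (2 * K) = 4 ^ K" "Gamma (real K + 1) = fact K"
    by (simp_all add: power_mult Gamma_fact add.commute)
  then show ?thesis
    unfolding jacobi_coeff_def joukowski_coeff_add_eq_pochhammer jacobi_d_prefactor_def hyp3F2_term_def
      lower_binomial upper_binomial prefactor_pochhammer falling_pochhammer
      P_def[symmetric] Q_def[symmetric] A_def[symmetric]
    using \<open>A \<noteq> 0\<close> by (simp add: field_simps)
qed

lemma sum_jacobi_coeff_mult_joukowski_coeff: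
  fixes \<alpha> \<beta> :: real
  assumes "\<alpha> > -1" and "K \<le> n"
  shows "(\<Sum>j\<le>n. jacobi_coeff \<alpha> \<beta> n j * joukowski_coeff j K) = jacobi_d \<alpha> \<beta> K n"
proof -
  have "(\<Sum>j\<le>n. jacobi_coeff \<alpha> \<beta> n j * joukowski_coeff j K)
      = (\<Sum>j\<in>{K..n}. jacobi_coeff \<alpha> \<beta> n j * joukowski_coeff j K)"
    by (rule sum.mono_neutral_right) (auto simp: joukowski_coeff_def)
  also have "\<dots> = (\<Sum>i\<le>n - K. jacobi_coeff \<alpha> \<beta> n (K + i) * joukowski_coeff (K + i) K)"
    using assms(2)
    by (intro sum.reindex_bij_witness[where i = "\<lambda>i. K + i" and j = "\<lambda>j. j - K"]) auto
  also have "\<dots> = jacobi_d \<alpha> \<beta> K n"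
    using assms
    by (simp add: jacobi_d_eq_sum_hyp3F2_term jacobi_coeff_mult_joukowski_coeff sum_distrib_left)
  finally show ?thesis .
qed

theorem theorem3p1:
  fixes \<alpha> \<beta> \<rho> :: real and n :: nat and u :: complex
  assumes "\<alpha> > -1" and "\<beta> > -1"
    and "\<rho> \<ge> 1" and "norm u = \<rho>"
  shows "jacobiP n \<alpha> \<beta> ((u + inverse u) / 2)
           = (\<Sum>k = -int n..int n. complex_of_real (jacobi_d \<alpha> \<beta> (nat \<bar>k\<bar>) n) * u powi k)"
proof -
  have "u \<noteq> 0"
    using assms(3,4) by auto
  then have "jacobiP n \<alpha> \<beta> ((u + inverse u) / 2)
      = (\<Sum>j\<le>n. \<Sum>k = -int n..int n.
           complex_of_real (jacobi_coeff \<alpha> \<beta> n j * joukowski_coeff j (nat \<bar>k\<bar>)) * u powi k)"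
    by (simp add: jacobiP_eq_sum_jacobi_coeff joukowski_shifted_power sum_distrib_left mult_ac)
  also have "\<dots> = (\<Sum>k = -int n..int n.
      complex_of_real (\<Sum>j\<le>n. jacobi_coeff \<alpha> \<beta> n j * joukowski_coeff j (nat \<bar>k\<bar>)) * u powi k)"
    by (simp add: sum.swap[of _ "{..n}"] sum_distrib_right)
  also have "\<dots> = (\<Sum>k = -int n..int n. complex_of_real (jacobi_d \<alpha> \<beta> (nat \<bar>k\<bar>) n) * u powi k)"
  proof (rule sum.cong)
    fix k assume "k \<in> {-int n..int n}"
    then have "nat \<bar>k\<bar> \<le> n"
      by auto
    then show "complex_of_real (\<Sum>j\<le>n. jacobi_coeff \<alpha> \<beta> n j * joukowski_coeff j (nat \<bar>k\<bar>)) * u powi k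
        = complex_of_real (jacobi_d \<alpha> \<beta> (nat \<bar>k\<bar>) n) * u powi k"
      by (simp only: sum_jacobi_coeff_mult_joukowski_coeff[OF assms(1)])
  qed simp
  finally show ?thesis .
qed

end
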